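(* Let $d\ge 3$ and for $x,y,z\in\mathbb S^{d-1}$ let $V(x,y,z)$ be the volume of the parallelepiped spanned by the vectors $x,y,z$, so that $V^2(x,y,z)=1-\langle y,z\rangle^2-\langle x,z\rangle^2-\langle x,y\rangle^2+2\langle y,z\rangle\langle x,z\rangle\langle x,y\rangle$. Then every isotropic probability measure on $\mathbb S^{d-1}$ maximizes $I_{V^2}(\mu)=\iiint V^2(x,y,z)\,d\mu(x)d\mu(y)d\mu(z)$ over $\mu\in\mathcal P(\mathbb S^{d-1})$.
   Context: $\mathbb S^{d-1}$ is the unit sphere in $\mathbb R^d$ and $\mathcal P(\mathbb S^{d-1})$ the set of Borel probability measures on it. $\mu$ is isotropic if $\int xx^T\,d\mu(x)=\frac1d I_d$. *)

theory Defs
  imports "HOL-Probability.Probability"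
begin

definition V2 :: "real^'n \<Rightarrow> real^'n \<Rightarrow> real^'n \<Rightarrow> real" where
  "V2 x y z = 1 - (y \<bullet> z)\<^sup>2 - (x \<bullet> z)\<^sup>2 - (x \<bullet> y)\<^sup>2
              + 2 * (y \<bullet> z) * (x \<bullet> z) * (x \<bullet> y)"

definition sphere_prob :: "(real^'n) measure \<Rightarrow> bool" where
  "sphere_prob M \<longleftrightarrow> prob_space M \<and> sets M = sets borel \<and> emeasure M (sphere 0 1) = 1"

definition isotropic :: "(real^'n) measure \<Rightarrow> bool" where
  "isotropic M \<longleftrightarrow> (\<forall>i j. (\<integral>x. x$i * x$j \<partial>M) = (if i = j then 1 / real CARD('n) else 0))"

definition I_V2 :: "(real^'n) measure \<Rightarrow> real" where
  "I_V2 M = (\<integral>x. (\<integral>y. (\<integral>z. V2 x y z \<partial>M) \<partial>M) \<partial>M)"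

end

theory Submission
  imports Defs
begin

text \<open>
  Let \<open>B\<close> be the second-moment matrix of a probability measure on the sphere: it is
  symmetric, has trace 1 and Frobenius norm (the norm of \<open>real^'n^'n\<close>) at most 1.
  Integrating \<open>V\<^sup>2\<close> one variable at a time gives
  \<open>I_V2 = 1 - 3 tr B\<^sup>2 + 2 tr B\<^sup>3\<close>, which is \<open>1 - 3/d + 2/d\<^sup>2\<close> for isotropic measures
  (\<open>B = I/d\<close>). So it suffices that \<open>3 tr B\<^sup>2 - 2 tr B\<^sup>3 \<ge> 3/d - 2/d\<^sup>2\<close>.
  If the quadratic form of \<open>B\<close> exceeds \<open>5/6\<close> somewhere on the sphere, then \<open>s = \<parallel>B\<parallel>\<close> lies
  in \<open>(5/6, 1]\<close> and \<open>tr B\<^sup>3 \<le> s\<^sup>3\<close>, so \<open>3 tr B\<^sup>2 - 2 tr B\<^sup>3 \<ge> 3s\<^sup>2 - 2s\<^sup>3 \<ge> 7/9\<close>, which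
  already exceeds \<open>3/d - 2/d\<^sup>2\<close> for \<open>d \<ge> 3\<close>. Otherwise \<open>B \<le> r I\<close> with \<open>r = 3/2 - 2/d\<close>, and
  \<open>tr ((B - I/d)\<^sup>2 (r I - B)) \<ge> 0\<close> expands to the claim: this is the tangent-line bound for
  \<open>3\<lambda>\<^sup>2 - 2\<lambda>\<^sup>3\<close> at \<open>1/d\<close>, summed over the spectrum of \<open>B\<close> without diagonalising it.
\<close>

lemma norm_matrix_vector_mult_le:
  fixes A :: "real^'n^'m"
  shows "norm (A *v x) \<le> norm A * norm x"
proof -
  have "(norm (A *v x))\<^sup>2 = (\<Sum>i\<in>UNIV. (A$i \<bullet> x)\<^sup>2)"
    unfolding power2_norm_eq_inner
    by (simp add: inner_vec_def matrix_vector_mul_component power2_eq_square)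
  also have "\<dots> \<le> (\<Sum>i\<in>UNIV. (norm (A$i) * norm x)\<^sup>2)"
    by (intro sum_mono) (simp add: abs_le_square_iff[symmetric] Cauchy_Schwarz_ineq2)
  also have "\<dots> = (norm A * norm x)\<^sup>2"
    by (simp add: norm_vec_def L2_set_def sum_distrib_right power_mult_distrib sum_nonneg)
  finally show ?thesis
    by (rule power2_le_imp_le) simp
qed

lemma abs_quadratic_form_le:
  fixes A :: "real^'n^'n"
  shows "\<bar>x \<bullet> (A *v x)\<bar> \<le> norm A * (norm x)\<^sup>2"
proof -
  have "\<bar>x \<bullet> (A *v x)\<bar> \<le> norm x * norm (A *v x)"
    by (rule Cauchy_Schwarz_ineq2)
  also have "\<dots> \<le> norm x * (norm A * norm x)"
    by (intro mult_left_mono norm_matrix_vector_mult_le norm_ge_zero)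
  finally show ?thesis
    by (simp add: power2_eq_square mult_ac)
qed

lemma sum_norm_column_sq:
  fixes A :: "real^'n^'m"
  shows "(\<Sum>k\<in>UNIV. (norm (column k A))\<^sup>2) = (norm A)\<^sup>2"
  by (simp add: norm_vec_def L2_set_def column_def sum_nonneg) (rule sum.swap)

lemma symmetric_matrix_nth:
  fixes B :: "'a^'n^'n"
  assumes "transpose B = B"
  shows "B$i$j = B$j$i"
  using assms by (metis transpose_def vec_lambda_beta)

lemma trace_mult_self_symmetric:
  fixes B :: "real^'n^'n"
  assumes "transpose B = B"
  shows "trace (B ** B) = (norm B)\<^sup>2"
  using symmetric_matrix_nth[OF assms]
  by (simp add: trace_def matrix_matrix_mult_def norm_vec_def L2_set_def sum_nonneg power2_eq_square)

lemma trace_cube_symmetric: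
  fixes B :: "real^'n^'n"
  assumes "transpose B = B"
  shows "trace (B ** B ** B) = (\<Sum>k\<in>UNIV. column k B \<bullet> (B *v column k B))"
proof -
  have "trace (B ** B ** B) = (\<Sum>i\<in>UNIV. \<Sum>j\<in>UNIV. \<Sum>k\<in>UNIV. B$i$k * (B$i$j * B$j$k))"
    using symmetric_matrix_nth[OF assms]
    by (simp add: trace_def matrix_matrix_mult_def sum_distrib_left sum_distrib_right mult_ac)
  also have "\<dots> = (\<Sum>i\<in>UNIV. \<Sum>k\<in>UNIV. \<Sum>j\<in>UNIV. B$i$k * (B$i$j * B$j$k))"
    by (rule sum.cong[OF refl], rule sum.swap)
  also have "\<dots> = (\<Sum>k\<in>UNIV. \<Sum>i\<in>UNIV. \<Sum>j\<in>UNIV. B$i$k * (B$i$j * B$j$k))"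
    by (rule sum.swap)
  also have "\<dots> = (\<Sum>k\<in>UNIV. column k B \<bullet> (B *v column k B))"
    by (simp add: column_def inner_vec_def matrix_vector_mult_def sum_distrib_left)
  finally show ?thesis .
qed

lemma trace_cube_le_norm_cube:
  fixes B :: "real^'n^'n"
  assumes "transpose B = B"
  shows "trace (B ** B ** B) \<le> norm B ^ 3"
proof -
  have "trace (B ** B ** B) \<le> (\<Sum>k\<in>UNIV. norm B * (norm (column k B))\<^sup>2)"
    unfolding trace_cube_symmetric[OF assms]
    by (intro sum_mono) (metis abs_le_D1 abs_quadratic_form_le)
  also have "\<dots> = norm B ^ 3"
    unfolding sum_distrib_left[symmetric] sum_norm_column_sq
    by (simp add: power3_eq_cube power2_eq_square)
  finally show ?thesis .
qed

text \<open>This is \<open>tr ((B - aI) (rI - B) (B - aI)) \<ge> 0\<close>, computed column by column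
  (\<open>c k\<close> is the \<open>k\<close>-th column of \<open>B - aI\<close>).\<close>

lemma trace_square_cube_tangent_bound:
  fixes B :: "real^'n^'n" and a r :: real
  assumes sym: "transpose B = B" and tr: "trace B = 1"
    and le: "\<And>u. u \<bullet> (B *v u) \<le> r * (u \<bullet> u)"
  shows "r * (2 * a - a\<^sup>2 * real CARD('n)) + a\<^sup>2
    \<le> (r + 2 * a) * trace (B ** B) - trace (B ** B ** B)"
proof -
  define c where "c k = column k B - a *\<^sub>R axis k 1" for k
  have col_k: "column k B $ k = B$k$k"
    and Bcol_k: "(B *v column k B) $ k = column k B \<bullet> column k B" for k
    using symmetric_matrix_nth[OF sym]
    by (simp_all add: column_def matrix_vector_mul_component inner_vec_def)
  have c_c: "c k \<bullet> c k = (norm (column k B))\<^sup>2 - 2 * a * B$k$k + a\<^sup>2" for k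
    unfolding c_def power2_norm_eq_inner
    by (simp add: inner_diff_left inner_diff_right inner_axis inner_axis' inner_axis_axis col_k
        algebra_simps power2_eq_square)
  have c_Bc: "c k \<bullet> (B *v c k)
      = column k B \<bullet> (B *v column k B) - 2 * a * (norm (column k B))\<^sup>2 + a\<^sup>2 * B$k$k" for k
  proof -
    have "B *v c k = B *v column k B - a *\<^sub>R column k B"
      unfolding c_def matrix_vector_mult_diff_distrib matrix_vector_mult_scaleR matrix_vector_mult_basis ..
    then have "c k \<bullet> (B *v c k)
        = (column k B - a *\<^sub>R axis k 1) \<bullet> (B *v column k B - a *\<^sub>R column k B)"
      by (simp add: c_def)
    then show ?thesis
      unfolding power2_norm_eq_inner
      by (simp add: inner_diff_left inner_diff_right inner_axis' col_k Bcol_k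
          algebra_simps power2_eq_square)
  qed
  have diag: "(\<Sum>k\<in>UNIV. B$k$k) = 1"
    using tr by (simp add: trace_def)
  have "0 \<le> (\<Sum>k\<in>UNIV. r * (c k \<bullet> c k) - c k \<bullet> (B *v c k))"
    by (intro sum_nonneg) (metis diff_ge_0_iff_ge le)
  also have "\<dots> = r * (trace (B ** B) - 2 * a + a\<^sup>2 * real CARD('n))
      - (trace (B ** B ** B) - 2 * a * trace (B ** B) + a\<^sup>2)"
    by (simp add: c_c c_Bc sum_subtractf sum.distrib sum_distrib_left[symmetric] diag
        trace_cube_symmetric[OF sym] trace_mult_self_symmetric[OF sym] sum_norm_column_sq)
  finally show ?thesis
    by (simp add: algebra_simps)
qed

lemma mat_mult_mat: "mat a ** mat b = (mat (a * b) :: 'a::comm_semiring_1^'n^'n)"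
proof -
  have "(\<Sum>k\<in>UNIV. mat a $ i $ k * mat b $ k $ j) = mat (a * b) $ i $ j" for i j :: 'n
  proof -
    have "(\<Sum>k\<in>UNIV. mat a $ i $ k * mat b $ k $ j)
        = (\<Sum>k\<in>UNIV. if k = i then a * mat b $ i $ j else 0)"
      by (rule sum.cong) (auto simp: mat_def)
    then show ?thesis
      by (simp add: mat_def)
  qed
  then show ?thesis
    by (simp add: matrix_matrix_mult_def vec_eq_iff)
qed

lemma trace_mat: "trace (mat c :: 'a::semiring_1^'n^'n) = of_nat CARD('n) * c"
  by (simp add: trace_def mat_def)

lemma cubic_ge_seven_ninths:
  fixes s :: real
  assumes "5/6 \<le> s" "s \<le> 1"
  shows "7/9 \<le> 3 * s\<^sup>2 - 2 * s ^ 3"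
proof -
  have "7/9 \<le> 1 - (1/6)\<^sup>2 * (3::real)"
    by (simp add: power2_eq_square)
  also have "\<dots> \<le> 1 - (1 - s)\<^sup>2 * (1 + 2 * s)"
    using assms by (intro diff_left_mono mult_mono power_mono) auto
  also have "\<dots> = 3 * s\<^sup>2 - 2 * s ^ 3"
    by (simp add: algebra_simps power2_eq_square power3_eq_cube)
  finally show ?thesis .
qed

lemma tangent_value_le_seven_ninths:
  fixes a :: real
  assumes "0 \<le> a" "a \<le> 1/3"
  shows "3 * a - 2 * a\<^sup>2 \<le> 7/9"
proof -
  have "0 \<le> (1/3 - a) * (7/3 - 2 * a)"
    using assms by (intro mult_nonneg_nonneg) auto
  also have "\<dots> = 7/9 - (3 * a - 2 * a\<^sup>2)"
    by (simp add: field_simps power2_eq_square)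
  finally show ?thesis
    by simp
qed

lemma trace_square_cube_lower_bound:
  fixes B :: "real^'n^'n"
  assumes sym: "transpose B = B" and tr: "trace B = 1" and norm: "norm B \<le> 1"
    and card: "3 \<le> CARD('n)"
  shows "3 / real CARD('n) - 2 / (real CARD('n))\<^sup>2
    \<le> 3 * trace (B ** B) - 2 * trace (B ** B ** B)"
proof -
  define a where "a = 1 / real CARD('n)"
  have a: "0 \<le> a" "a \<le> 1/3" "a\<^sup>2 * real CARD('n) = a"
    using card by (auto simp: a_def field_simps power2_eq_square)
  have target: "3 / real CARD('n) - 2 / (real CARD('n))\<^sup>2 = 3 * a - 2 * a\<^sup>2"
    by (simp add: a_def power2_eq_square)
  show ?thesis
  proof (cases "\<exists>u. 5/6 * (u \<bullet> u) < u \<bullet> (B *v u)")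
    case True
    then obtain u where u: "5/6 * (u \<bullet> u) < u \<bullet> (B *v u)"
      by blast
    also have "\<dots> \<le> norm B * (u \<bullet> u)"
      using abs_le_D1[OF abs_quadratic_form_le[of u B]] by (simp add: power2_norm_eq_inner)
    finally have "5/6 < norm B"
      by (rule mult_right_less_imp_less) simp
    then have "7/9 \<le> 3 * (norm B)\<^sup>2 - 2 * norm B ^ 3"
      using norm by (intro cubic_ge_seven_ninths) auto
    also have "\<dots> \<le> 3 * trace (B ** B) - 2 * trace (B ** B ** B)"
      using trace_mult_self_symmetric[OF sym] trace_cube_le_norm_cube[OF sym] by simp
    finally show ?thesis
      using tangent_value_le_seven_ninths[OF a(1,2)] target by linarith
  next
    case False
    have "u \<bullet> (B *v u) \<le> (3/2 - 2 * a) * (u \<bullet> u)" for u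
    proof -
      have "u \<bullet> (B *v u) \<le> 5/6 * (u \<bullet> u)"
        using False by (simp add: not_less)
      also have "\<dots> \<le> (3/2 - 2 * a) * (u \<bullet> u)"
        using a by (intro mult_right_mono) auto
      finally show ?thesis .
    qed
    from trace_square_cube_tangent_bound[OF sym tr this, of a, unfolded a(3)]
    have "(3/2 - 2 * a) * (2 * a - a) + a\<^sup>2 \<le> 3/2 * trace (B ** B) - trace (B ** B ** B)"
      by simp
    moreover have "(3/2 - 2 * a) * (2 * a - a) + a\<^sup>2 = 3/2 * a - a\<^sup>2"
      by (simp add: algebra_simps power2_eq_square)
    ultimately show ?thesis
      unfolding target by linarith
  qed
qed

definition second_moment :: "(real^'n) measure \<Rightarrow> real^'n^'n" where
  "second_moment M = (\<chi> i j. \<integral>x. x$i * x$j \<partial>M)"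

lemma transpose_second_moment: "transpose (second_moment M) = second_moment M"
  by (simp add: second_moment_def transpose_def mult.commute)

lemma second_moment_isotropic:
  fixes M :: "(real^'n) measure"
  assumes "isotropic M"
  shows "second_moment M = mat (1 / real CARD('n))"
  using assms by (simp add: isotropic_def second_moment_def mat_def vec_eq_iff)

lemma sphere_prob_prob_space: "sphere_prob M \<Longrightarrow> prob_space M"
  by (simp add: sphere_prob_def)

lemma AE_sphere_prob_norm_eq_1:
  assumes "sphere_prob M"
  shows "AE x in M. norm x = 1"
proof -
  interpret prob_space M
    using assms by (rule sphere_prob_prob_space)
  have "space M = UNIV"
    using assms unfolding sphere_prob_def by (metis sets_eq_imp_space_eq space_borel)
  then have "{x \<in> space M. norm x = 1} = sphere 0 1"
    by auto
  then show ?thesis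
    using assms unfolding sphere_prob_def by (intro AE_I_eq_1) auto
qed

lemma borel_measurable_sphere_prob:
  fixes f :: "real^'n \<Rightarrow> real"
  assumes "sphere_prob M" "continuous_on UNIV f"
  shows "f \<in> borel_measurable M"
  using assms borel_measurable_continuous_onI measurable_cong_sets
  unfolding sphere_prob_def by blast

lemma integrable_sphere_prob_bounded:
  fixes f :: "real^'n \<Rightarrow> real"
  assumes "sphere_prob M" "continuous_on UNIV f" "\<And>x. norm x = 1 \<Longrightarrow> \<bar>f x\<bar> \<le> C"
  shows "integrable M f"
proof -
  interpret prob_space M
    using assms(1) by (rule sphere_prob_prob_space)
  show ?thesis
    using AE_sphere_prob_norm_eq_1[OF assms(1)] assms(3)
    by (intro integrable_const_bound[where B = C] borel_measurable_sphere_prob assms(1,2)) auto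
qed

lemma integrable_inner_mult_inner:
  assumes "sphere_prob M"
  shows "integrable M (\<lambda>x. (a \<bullet> x) * (b \<bullet> x))"
proof (rule integrable_sphere_prob_bounded[OF assms])
  show "continuous_on UNIV (\<lambda>x. (a \<bullet> x) * (b \<bullet> x))"
    by (intro continuous_intros)
  show "\<bar>(a \<bullet> x) * (b \<bullet> x)\<bar> \<le> norm a * norm b" if "norm x = 1" for x
    using Cauchy_Schwarz_ineq2[of a x] Cauchy_Schwarz_ineq2[of b x] that
    by (simp add: abs_mult mult_mono')
qed

lemma integrable_quadratic_form:
  fixes A :: "real^'n^'n"
  assumes "sphere_prob M"
  shows "integrable M (\<lambda>x. x \<bullet> (A *v x))"
proof (rule integrable_sphere_prob_bounded[OF assms])
  show "continuous_on UNIV (\<lambda>x. x \<bullet> (A *v x))"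
    by (intro continuous_intros)
  show "\<bar>x \<bullet> (A *v x)\<bar> \<le> norm A" if "norm x = 1" for x
    using abs_quadratic_form_le[of x A] that by simp
qed

lemma integral_inner_mult_inner:
  assumes "sphere_prob M"
  shows "(\<integral>x. (a \<bullet> x) * (b \<bullet> x) \<partial>M) = a \<bullet> (second_moment M *v b)"
proof -
  have "integrable M (\<lambda>x. x$i * x$j)" for i j
    using integrable_inner_mult_inner[OF assms, of "axis i 1" "axis j 1"] by (simp add: inner_axis')
  moreover have "(a \<bullet> x) * (b \<bullet> x) = (\<Sum>i\<in>UNIV. \<Sum>j\<in>UNIV. (a$i * b$j) * (x$i * x$j))" for x
    by (simp add: inner_vec_def sum_product mult_ac)
  ultimately have "(\<integral>x. (a \<bullet> x) * (b \<bullet> x) \<partial>M)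
      = (\<Sum>i\<in>UNIV. \<Sum>j\<in>UNIV. (a$i * b$j) * (\<integral>x. x$i * x$j \<partial>M))"
    by simp
  then show ?thesis
    by (simp add: second_moment_def inner_vec_def matrix_vector_mult_def sum_distrib_left mult_ac)
qed

lemma integral_quadratic_form:
  fixes A :: "real^'n^'n"
  assumes "sphere_prob M"
  shows "(\<integral>x. x \<bullet> (A *v x) \<partial>M) = trace (A ** second_moment M)"
proof -
  let ?B = "second_moment M"
  have "integrable M (\<lambda>x. x$i * (c \<bullet> x))" and "(\<integral>x. x$i * (c \<bullet> x) \<partial>M) = (?B *v c)$i" for i c
    using integrable_inner_mult_inner[OF assms, of "axis i 1" c]
      integral_inner_mult_inner[OF assms, of "axis i 1" c]
    by (simp_all add: inner_axis')
  moreover have "x \<bullet> (A *v x) = (\<Sum>i\<in>UNIV. x$i * (A$i \<bullet> x))" for x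
    by (simp add: inner_vec_def matrix_vector_mul_component)
  ultimately have "(\<integral>x. x \<bullet> (A *v x) \<partial>M) = (\<Sum>i\<in>UNIV. (?B *v A$i)$i)"
    by simp
  also have "\<dots> = trace (A ** ?B)"
    using symmetric_matrix_nth[OF transpose_second_moment, of M]
    by (simp add: matrix_vector_mul_component inner_vec_def trace_def matrix_matrix_mult_def
        mult.commute)
  finally show ?thesis .
qed

lemma trace_second_moment:
  assumes "sphere_prob M"
  shows "trace (second_moment M) = 1"
proof -
  interpret prob_space M
    using assms by (rule sphere_prob_prob_space)
  have "trace (second_moment M) = (\<integral>x. x \<bullet> (mat 1 *v x) \<partial>M)"
    using integral_quadratic_form[OF assms, of "mat 1"] by simp
  also have "\<dots> = (\<integral>x. 1 \<partial>M)"
    using AE_sphere_prob_norm_eq_1[OF assms]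
    by (intro integral_cong_AE borel_measurable_sphere_prob[OF assms])
       (auto intro!: continuous_intros simp: dot_square_norm)
  finally show ?thesis
    using prob_space by simp
qed

lemma norm_second_moment_le_1:
  assumes "sphere_prob M"
  shows "norm (second_moment M) \<le> 1"
proof -
  interpret prob_space M
    using assms by (rule sphere_prob_prob_space)
  let ?B = "second_moment M"
  have "(norm ?B)\<^sup>2 = trace (?B ** ?B)"
    by (rule trace_mult_self_symmetric[symmetric, OF transpose_second_moment])
  also have "\<dots> = (\<integral>x. x \<bullet> (?B *v x) \<partial>M)"
    by (rule integral_quadratic_form[symmetric, OF assms])
  also have "\<dots> \<le> (\<integral>x. norm ?B \<partial>M)"
  proof (intro integral_mono_AE integrable_quadratic_form[OF assms] integrable_const)
    show "AE x in M. x \<bullet> (?B *v x) \<le> norm ?B"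
      using AE_sphere_prob_norm_eq_1[OF assms]
    proof eventually_elim
      case (elim x)
      then show ?case
        using abs_le_D1[OF abs_quadratic_form_le[of x ?B]] by simp
    qed
  qed
  finally have "(norm ?B)\<^sup>2 \<le> norm ?B"
    using prob_space by simp
  moreover have "s \<le> 1" if "s\<^sup>2 \<le> s" for s :: real
    using that
    by (cases "s \<le> 1") (auto simp: power2_eq_square dest: mult_strict_right_mono[of 1 s s])
  ultimately show ?thesis
    by blast
qed

lemma I_V2_second_moment:
  assumes "sphere_prob M"
  shows "I_V2 M = 1 - 3 * trace (second_moment M ** second_moment M)
    + 2 * trace (second_moment M ** second_moment M ** second_moment M)"
proof -
  interpret prob_space M
    using assms by (rule sphere_prob_prob_space)
  let ?B = "second_moment M"
  note integrable = integrable_inner_mult_inner[OF assms] integrable_quadratic_form[OF assms]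
  note integral = integral_inner_mult_inner[OF assms] integral_quadratic_form[OF assms]
  have integral_z: "(\<integral>z. V2 x y z \<partial>M) = 1 - (x \<bullet> y) * (x \<bullet> y) - y \<bullet> (?B *v y) - x \<bullet> (?B *v x)
      + 2 * ((x \<bullet> y) * ((?B *v x) \<bullet> y))" for x y
  proof -
    have "V2 x y z = 1 - (x \<bullet> y) * (x \<bullet> y) - (y \<bullet> z) * (y \<bullet> z) - (x \<bullet> z) * (x \<bullet> z)
        + (2 * (x \<bullet> y)) * ((y \<bullet> z) * (x \<bullet> z))" for z
      by (simp add: V2_def power2_eq_square mult_ac)
    then have "(\<integral>z. V2 x y z \<partial>M) = 1 - (x \<bullet> y) * (x \<bullet> y) - y \<bullet> (?B *v y) - x \<bullet> (?B *v x)
        + (2 * (x \<bullet> y)) * (y \<bullet> (?B *v x))"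
      using integrable by (simp add: integral prob_space)
    then show ?thesis
      by (simp add: inner_commute[of y])
  qed
  have integral_yz: "(\<integral>y. \<integral>z. V2 x y z \<partial>M \<partial>M)
      = 1 - 2 * (x \<bullet> (?B *v x)) - trace (?B ** ?B) + 2 * (x \<bullet> ((?B ** ?B) *v x))" for x
    using integrable by (simp add: integral_z integral prob_space matrix_vector_mul_assoc)
  show ?thesis
    using integrable by (simp add: I_V2_def integral_yz integral prob_space)
qed


theorem theorem4p3:
  fixes \<mu> :: "(real^'n) measure"
  assumes "CARD('n) \<ge> 3"
    and "sphere_prob \<mu>"
    and "isotropic \<mu>"
  shows "\<forall>\<nu> :: (real^'n) measure. sphere_prob \<nu> \<longrightarrow> I_V2 \<nu> \<le> I_V2 \<mu>"
proof (intro allI impI)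
  fix \<nu> :: "(real^'n) measure"
  assume \<nu>: "sphere_prob \<nu>"
  let ?d = "real CARD('n)" and ?B = "second_moment \<nu>"
  have "I_V2 \<mu> = 1 - (3 / ?d - 2 / ?d\<^sup>2)"
    by (simp add: I_V2_second_moment[OF assms(2)] second_moment_isotropic[OF assms(3)]
        mat_mult_mat trace_mat power2_eq_square)
  moreover have "3 / ?d - 2 / ?d\<^sup>2 \<le> 3 * trace (?B ** ?B) - 2 * trace (?B ** ?B ** ?B)"
    using transpose_second_moment trace_second_moment[OF \<nu>] norm_second_moment_le_1[OF \<nu>] assms(1)
    by (rule trace_square_cube_lower_bound)
  ultimately show "I_V2 \<nu> \<le> I_V2 \<mu>"
    by (simp add: I_V2_second_moment[OF \<nu>])
qed

end
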